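(* Let $n,m$ be positive integers with $m+2\le n$ and let $H$ be a graph. Then $$\gamma_{gr}(P_n^m\circ H)=\begin{cases}\left\lceil \frac{n}{m+1}\right\rceil (\gamma_{gr} (H)-(m+1))+n+m & \text{if } \gamma_{gr}(H)\geq m+1,\\ 2\gamma_{gr}(H)+n-m-2 & \text{if } \gamma_{gr}(H)\leq m.\end{cases}$$
   Context: $P_n^m$ has vertex set $[n]$, distinct $i,j$ adjacent iff $|i-j|\le m$. The lexicographic product $G\circ H$ has vertex set $V(G)\times V(H)$, with $(g_1,h_1)$ adjacent to $(g_2,h_2)$ iff $g_1g_2\in E(G)$, or $g_1=g_2$ and $h_1h_2\in E(H)$. $\gamma_{gr}$ is the Grundy domination number: the maximum length of a sequence $(v_1,\dots,v_k)$ of distinct vertices whose set is dominating and such that each $N[v_i]\setminus\bigcup_{j<i}N[v_j]$ is non-empty ($N[\cdot]$ the closed neighborhood). *)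

theory Defs
  imports Complex_Main
begin

definition graph :: "'a set \<Rightarrow> ('a \<Rightarrow> 'a \<Rightarrow> bool) \<Rightarrow> bool" where
  "graph V E \<longleftrightarrow> finite V \<and> V \<noteq> {} \<and>
     (\<forall>x y. E x y \<longrightarrow> x \<in> V \<and> y \<in> V \<and> x \<noteq> y \<and> E y x)"

definition cnbh :: "'a set \<Rightarrow> ('a \<Rightarrow> 'a \<Rightarrow> bool) \<Rightarrow> 'a \<Rightarrow> 'a set" where
  "cnbh V E v = {u \<in> V. u = v \<or> E v u}"

definition grundy_dom_seq :: "'a set \<Rightarrow> ('a \<Rightarrow> 'a \<Rightarrow> bool) \<Rightarrow> 'a list \<Rightarrow> bool" where
  "grundy_dom_seq V E xs \<longleftrightarrow> distinct xs \<and> set xs \<subseteq> V \<and>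
     (\<Union>v\<in>set xs. cnbh V E v) = V \<and>
     (\<forall>i<length xs. cnbh V E (xs ! i) - (\<Union>j<i. cnbh V E (xs ! j)) \<noteq> {})"

definition gamma_gr :: "'a set \<Rightarrow> ('a \<Rightarrow> 'a \<Rightarrow> bool) \<Rightarrow> nat" where
  "gamma_gr V E = Max {length xs | xs. grundy_dom_seq V E xs}"

definition path_pow_V :: "nat \<Rightarrow> nat set" where
  "path_pow_V n = {1..n}"

definition path_pow_E :: "nat \<Rightarrow> nat \<Rightarrow> nat \<Rightarrow> nat \<Rightarrow> bool" where
  "path_pow_E n m i j \<longleftrightarrow> i \<in> {1..n} \<and> j \<in> {1..n} \<and> i \<noteq> j \<and> i \<le> j + m \<and> j \<le> i + m"

definition lex_V :: "'a set \<Rightarrow> 'b set \<Rightarrow> ('a \<times> 'b) set" where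
  "lex_V VG VH = VG \<times> VH"

definition lex_E :: "'a set \<Rightarrow> ('a \<Rightarrow> 'a \<Rightarrow> bool) \<Rightarrow> 'b set \<Rightarrow> ('b \<Rightarrow> 'b \<Rightarrow> bool)
     \<Rightarrow> 'a \<times> 'b \<Rightarrow> 'a \<times> 'b \<Rightarrow> bool" where
  "lex_E VG EG VH EH p q \<longleftrightarrow> p \<in> VG \<times> VH \<and> q \<in> VG \<times> VH \<and>
     (EG (fst p) (fst q) \<or> (fst p = fst q \<and> EH (snd p) (snd q)))"

end

theory Submission
  imports Defs
begin

text \<open>
  Lower bound: play a Grundy sequence of \<open>H\<close> in each of the layers
  \<open>1, m + 2, \<dots>, 1 + (p - 2)(m + 1)\<close> and \<open>n\<close>, and in every layer \<open>i\<close> between the last two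
  of them a single vertex footprinting layer \<open>i + m\<close>.

  Upper bound: a vertex of a Grundy sequence of the product footprints either inside its own
  layer (it is inner) or in a neighbouring layer, which it dominates entirely (its witness
  layer, different for different vertices). A layer holds at most \<open>\<gamma>(H)\<close> inner vertices, and
  fewer if it is also a witness layer, so the length is at most \<open>\<gamma>(H) p + w\<close> for \<open>p\<close> inner
  layers and \<open>w\<close> further witness layers. Layers first reached from an inner vertex are of
  neither kind; there are at least \<open>m\<close> of them, and \<open>m\<close> in every gap between consecutive inner
  layers, which are more than \<open>m\<close> apart.

  Both bounds read \<open>p (\<gamma>(H) - m - 1) + n + m\<close> for some \<open>2 \<le> p \<le> \<lceil>n / (m + 1)\<rceil>\<close>; this is
  linear in \<open>p\<close>, so one of the two extreme values of \<open>p\<close> gives the Grundy domination number.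
\<close>

section \<open>Legal sequences\<close>

fun legal_seq :: "'a set \<Rightarrow> ('a \<Rightarrow> 'a \<Rightarrow> bool) \<Rightarrow> 'a set \<Rightarrow> 'a list \<Rightarrow> bool" where
  "legal_seq V E D [] \<longleftrightarrow> True"
| "legal_seq V E D (v # vs) \<longleftrightarrow>
     v \<in> V \<and> \<not> cnbh V E v \<subseteq> D \<and> legal_seq V E (D \<union> cnbh V E v) vs"

lemma cnbh_subset: "cnbh V E v \<subseteq> V"
  by (auto simp: cnbh_def)

lemma self_in_cnbh: "v \<in> V \<Longrightarrow> v \<in> cnbh V E v"
  by (auto simp: cnbh_def)

lemma legal_seq_append:
  "legal_seq V E D (xs @ ys) \<longleftrightarrow>
     legal_seq V E D xs \<and> legal_seq V E (D \<union> (\<Union>v\<in>set xs. cnbh V E v)) ys"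
  by (induction xs arbitrary: D) (auto simp: Un_assoc)

lemma legal_seq_iff_nth:
  "legal_seq V E D xs \<longleftrightarrow>
     (\<forall>i<length xs. xs ! i \<in> V \<and> \<not> cnbh V E (xs ! i) \<subseteq> D \<union> (\<Union>j<i. cnbh V E (xs ! j)))"
proof (induction xs arbitrary: D)
  case Nil
  then show ?case by simp
next
  case (Cons v vs)
  have "(\<Union>j<Suc i. f j) = f 0 \<union> (\<Union>j<i. f (Suc j))" for i and f :: "nat \<Rightarrow> 'a set"
    by (auto simp: less_Suc_eq_0_disj)
  then show ?case
    unfolding legal_seq.simps Cons.IH by (simp add: All_less_Suc2 Un_assoc)
qed

lemma legal_seq_distinct: "legal_seq V E D xs \<Longrightarrow> distinct xs \<and> set xs \<subseteq> V"
proof (induction xs arbitrary: D)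
  case (Cons v vs)
  have "\<not> cnbh V E w \<subseteq> D'" if "legal_seq V E D' ws" "w \<in> set ws" for D' ws w
    using that by (induction ws arbitrary: D') auto
  with Cons show ?case by fastforce
qed simp

lemma grundy_dom_seq_iff_legal_seq:
  "grundy_dom_seq V E xs \<longleftrightarrow> legal_seq V E {} xs \<and> (\<Union>v\<in>set xs. cnbh V E v) = V"
  unfolding grundy_dom_seq_def legal_seq_iff_nth
  using legal_seq_distinct[of V E "{}" xs] legal_seq_iff_nth[of V E "{}" xs]
  by (auto simp: subset_iff)

lemma legal_seq_length_le_card:
  assumes "finite V" "legal_seq V E D xs"
  shows "length xs \<le> card V"
  using legal_seq_distinct[OF assms(2)] distinct_card card_mono[OF assms(1)] by metis

lemma legal_seq_extends_to_grundy_dom_seq: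
  assumes "finite V" "legal_seq V E {} xs"
  shows "\<exists>ys. grundy_dom_seq V E ys \<and> length xs \<le> length ys \<and>
           ((\<Union>v\<in>set xs. cnbh V E v) \<noteq> V \<longrightarrow> length xs < length ys)"
  using assms(2)
proof (induction "card V - length xs" arbitrary: xs rule: less_induct)
  case less
  show ?case
  proof (cases "(\<Union>v\<in>set xs. cnbh V E v) = V")
    case True
    with less.prems show ?thesis
      by (auto simp: grundy_dom_seq_iff_legal_seq)
  next
    case False
    moreover have "(\<Union>v\<in>set xs. cnbh V E v) \<subseteq> V"
      using cnbh_subset by fast
    ultimately obtain u where u: "u \<in> V" "u \<notin> (\<Union>v\<in>set xs. cnbh V E v)"
      by blast
    have legal: "legal_seq V E {} (xs @ [u])"
      using less.prems u self_in_cnbh[OF u(1)] by (auto simp: legal_seq_append)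
    then have "card V - length (xs @ [u]) < card V - length xs"
      using legal_seq_length_le_card[OF assms(1)] by fastforce
    from less.hyps[OF this legal] show ?thesis
      by fastforce
  qed
qed

lemma finite_grundy_lengths:
  "finite V \<Longrightarrow> finite {length xs | xs. grundy_dom_seq V E xs}"
  by (rule finite_subset[of _ "{..card V}"])
    (auto simp: grundy_dom_seq_iff_legal_seq intro: legal_seq_length_le_card)

lemma gamma_gr_attained:
  assumes "finite V"
  shows "\<exists>xs. grundy_dom_seq V E xs \<and> length xs = gamma_gr V E"
proof -
  have "{length xs | xs. grundy_dom_seq V E xs} \<noteq> {}"
    using legal_seq_extends_to_grundy_dom_seq[OF assms, of E "[]"] by auto
  from Max_in[OF finite_grundy_lengths[OF assms] this] show ?thesis
    unfolding gamma_gr_def by auto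
qed

lemma legal_seq_length_le_gamma_gr:
  assumes "finite V" "legal_seq V E {} xs"
  shows "length xs \<le> gamma_gr V E"
    and "length xs = gamma_gr V E \<Longrightarrow> (\<Union>v\<in>set xs. cnbh V E v) = V"
proof -
  obtain ys where ys: "grundy_dom_seq V E ys" "length xs \<le> length ys"
    "(\<Union>v\<in>set xs. cnbh V E v) \<noteq> V \<Longrightarrow> length xs < length ys"
    using legal_seq_extends_to_grundy_dom_seq[OF assms] by blast
  have "length ys \<le> gamma_gr V E"
    unfolding gamma_gr_def using ys(1) by (auto intro: Max_ge[OF finite_grundy_lengths[OF assms(1)]])
  with ys show "length xs \<le> gamma_gr V E"
    and "length xs = gamma_gr V E \<Longrightarrow> (\<Union>v\<in>set xs. cnbh V E v) = V"
    by linarith+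
qed

lemma gamma_gr_pos:
  assumes "finite V" "V \<noteq> {}"
  shows "1 \<le> gamma_gr V E"
proof -
  obtain v where "v \<in> V"
    using assms(2) by blast
  then have "legal_seq V E {} [v]"
    using self_in_cnbh by fastforce
  from legal_seq_length_le_gamma_gr(1)[OF assms(1) this] show ?thesis
    by simp
qed

lemma legal_seq_sorted_family:
  fixes J :: "nat set"
  assumes "finite J" "g ` J \<subseteq> V"
    and footprint: "\<And>j. j \<in> J \<Longrightarrow> \<exists>y\<in>cnbh V E (g j). \<forall>j'\<in>J. j' < j \<longrightarrow> y \<notin> cnbh V E (g j')"
  shows "legal_seq V E {} (map g (sorted_list_of_set J))"
  unfolding legal_seq_iff_nth
proof (intro allI impI)
  fix i
  define js where "js = sorted_list_of_set J"
  assume "i < length (map g (sorted_list_of_set J))"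
  then have i: "i < length js"
    by (simp add: js_def)
  have set_js: "set js = J" and sorted: "sorted_wrt (<) js"
    using assms(1) by (simp_all add: js_def)
  then have "js ! i \<in> J"
    using i by auto
  then obtain y where y: "y \<in> cnbh V E (g (js ! i))"
    and fresh: "\<forall>j'\<in>J. j' < js ! i \<longrightarrow> y \<notin> cnbh V E (g j')"
    using footprint by blast
  have "y \<notin> cnbh V E (g (js ! j))" if "j < i" for j
    using fresh sorted_wrt_nth_less[OF sorted that i] that i set_js by auto
  with y i \<open>js ! i \<in> J\<close> assms(2) show "map g (sorted_list_of_set J) ! i \<in> V \<and>
      \<not> cnbh V E (map g (sorted_list_of_set J) ! i)
        \<subseteq> {} \<union> (\<Union>j<i. cnbh V E (map g (sorted_list_of_set J) ! j))"
    unfolding js_def[symmetric] by auto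
qed

lemma card_sorted_family_le_gamma_gr:
  fixes J :: "nat set"
  assumes "finite V" "finite J" "g ` J \<subseteq> V"
    and "\<And>j. j \<in> J \<Longrightarrow> \<exists>y\<in>cnbh V E (g j). \<forall>j'\<in>J. j' < j \<longrightarrow> y \<notin> cnbh V E (g j')"
  shows "card J \<le> gamma_gr V E"
    and "card J = gamma_gr V E \<Longrightarrow> (\<Union>j\<in>J. cnbh V E (g j)) = V"
  using legal_seq_length_le_gamma_gr[OF assms(1) legal_seq_sorted_family[OF assms(2-4)]] assms(2)
  by simp_all

section \<open>Lexicographic products with powers of paths\<close>

lemma cnbh_lex_iff:
  assumes "graph VG EG" "l \<in> VG" "z \<in> VH"
  shows "(l', y) \<in> cnbh (lex_V VG VH) (lex_E VG EG VH EH) (l, z) \<longleftrightarrow>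
           y \<in> VH \<and> (EG l l' \<or> (l' = l \<and> y \<in> cnbh VH EH z))"
  using assms unfolding graph_def cnbh_def lex_V_def lex_E_def by auto

lemma legal_seq_in_layer:
  assumes "graph VG EG" "l \<in> VG" "legal_seq VH EH {y. (l, y) \<in> D} zs"
  shows "legal_seq (lex_V VG VH) (lex_E VG EG VH EH) D (map (Pair l) zs)"
  using assms(3)
proof (induction zs arbitrary: D)
  case (Cons z zs)
  then have z: "z \<in> VH" "\<not> cnbh VH EH z \<subseteq> {y. (l, y) \<in> D}"
    and rest: "legal_seq VH EH ({y. (l, y) \<in> D} \<union> cnbh VH EH z) zs"
    by auto
  have "\<not> EG l l"
    using assms(1) unfolding graph_def by blast
  then have layer: "{y. (l, y) \<in> D \<union> cnbh (lex_V VG VH) (lex_E VG EG VH EH) (l, z)} =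
      {y. (l, y) \<in> D} \<union> cnbh VH EH z"
    using cnbh_lex_iff[OF assms(1,2) z(1)] cnbh_subset by fastforce
  have "\<not> cnbh (lex_V VG VH) (lex_E VG EG VH EH) (l, z) \<subseteq> D"
    using z(2) cnbh_lex_iff[OF assms(1,2) z(1)] cnbh_subset by fast
  with rest layer Cons.IH z(1) assms(2) show ?case
    by (simp add: lex_V_def)
qed simp

lemma graph_path_pow: "0 < n \<Longrightarrow> graph (path_pow_V n) (path_pow_E n m)"
  unfolding graph_def path_pow_V_def path_pow_E_def by auto

lemma card_path_pow_nbrs:
  assumes "l \<in> {1..n}" "m < n"
  shows "m \<le> card {l'. path_pow_E n m l l'}"
proof -
  define lo where "lo = min l (n - m)"
  have "{lo..lo + m} - {l} \<subseteq> {l'. path_pow_E n m l l'}"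
    using assms unfolding lo_def path_pow_E_def by auto
  moreover have "finite {l'. path_pow_E n m l l'}"
    unfolding path_pow_E_def by simp
  moreover have "card ({lo..lo + m} - {l}) = m"
    using assms unfolding lo_def by auto
  ultimately show ?thesis
    by (metis card_mono)
qed

abbreviation path_lex_V :: "nat \<Rightarrow> 'a set \<Rightarrow> (nat \<times> 'a) set" where
  "path_lex_V n VH \<equiv> lex_V (path_pow_V n) VH"

abbreviation path_lex_E ::
  "nat \<Rightarrow> nat \<Rightarrow> 'a set \<Rightarrow> ('a \<Rightarrow> 'a \<Rightarrow> bool) \<Rightarrow> nat \<times> 'a \<Rightarrow> nat \<times> 'a \<Rightarrow> bool" where
  "path_lex_E n m VH EH \<equiv> lex_E (path_pow_V n) (path_pow_E n m) VH EH"

section \<open>The lower bound\<close>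

text \<open>A plan step \<open>(l, True)\<close> plays a whole Grundy sequence of \<open>H\<close> in layer \<open>l\<close>;
  a step \<open>(l, False)\<close> plays one vertex of layer \<open>l\<close>, which footprints layer \<open>l + m\<close>.
  The parameter \<open>c\<close> bounds the layers dominated so far, so the footprinted layer
  must lie above it.\<close>

definition plan_block :: "'a list \<Rightarrow> 'a \<Rightarrow> nat \<times> bool \<Rightarrow> (nat \<times> 'a) list" where
  "plan_block zs z0 step =
     (if snd step then map (Pair (fst step)) zs else [(fst step, z0)])"

fun admissible_plan :: "nat \<Rightarrow> nat \<Rightarrow> nat \<Rightarrow> (nat \<times> bool) list \<Rightarrow> bool" where
  "admissible_plan n m c [] \<longleftrightarrow> True"
| "admissible_plan n m c ((l, full) # ps) \<longleftrightarrow>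
     1 \<le> l \<and> c < (if full then l else l + m) \<and> (if full then l else l + m) \<le> n \<and>
     admissible_plan n m (max c (l + m)) ps"

lemma admissible_plan_antimono:
  "admissible_plan n m c ps \<Longrightarrow> c' \<le> c \<Longrightarrow> admissible_plan n m c' ps"
proof (induction ps arbitrary: c c')
  case (Cons step ps)
  then show ?case
    by (cases step) (auto intro: Cons.IH[of "max c (fst step + m)"])
qed simp

lemma legal_seq_plan:
  assumes "0 < n" "0 < m" "legal_seq VH EH {} zs" "z0 \<in> VH"
    and "admissible_plan n m c ps" "D \<subseteq> {u. fst u \<le> c}"
  shows "legal_seq (path_lex_V n VH) (path_lex_E n m VH EH) D (concat (map (plan_block zs z0) ps))"
  using assms(5,6)
proof (induction ps arbitrary: c D)
  case (Cons step ps)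
  obtain l full where step: "step = (l, full)"
    by (cases step)
  let ?N = "cnbh (path_lex_V n VH) (path_lex_E n m VH EH)"
  have graph: "graph (path_pow_V n) (path_pow_E n m)"
    using graph_path_pow[OF assms(1)] .
  have l: "l \<in> path_pow_V n" and fresh: "c < (if full then l else l + m)"
    and target: "(if full then l else l + m) \<le> n"
    and rest: "admissible_plan n m (max c (l + m)) ps"
    using Cons.prems(1) unfolding step path_pow_V_def by (auto split: if_splits)
  have block: "legal_seq (path_lex_V n VH) (path_lex_E n m VH EH) D (plan_block zs z0 step)"
  proof (cases full)
    case True
    then have "{y. (l, y) \<in> D} = {}"
      using Cons.prems(2) fresh by auto
    then have "legal_seq VH EH {y. (l, y) \<in> D} zs"
      using assms(3) by simp
    from legal_seq_in_layer[OF graph l this] show ?thesis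
      using True unfolding step plan_block_def by simp
  next
    case False
    then have "(l + m, z0) \<in> ?N (l, z0)" "(l + m, z0) \<notin> D"
      using cnbh_lex_iff[OF graph l assms(4)] assms(2,4) fresh target l Cons.prems(2)
      unfolding path_pow_E_def path_pow_V_def by auto
    then show ?thesis
      using False l assms(4) unfolding step plan_block_def by (auto simp: lex_V_def)
  qed
  have "fst u \<le> l + m" if "v \<in> set (plan_block zs z0 step)" "u \<in> ?N v" for u v
    using that unfolding step plan_block_def cnbh_def lex_E_def path_pow_E_def
    by (auto split: if_splits)
  then have "D \<union> (\<Union>v\<in>set (plan_block zs z0 step). ?N v) \<subseteq> {u. fst u \<le> max c (l + m)}"
    using Cons.prems(2) by fastforce
  with Cons.IH[OF rest] block show ?case
    by (simp add: legal_seq_append)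
qed simp

lemma admissible_plan_full_layers:
  "r0 < s \<Longrightarrow> c < 1 + r0 * (m + 1) \<Longrightarrow> 1 + (s - 1) * (m + 1) \<le> n \<Longrightarrow>
   admissible_plan n m (1 + (s - 1) * (m + 1) + m) rest \<Longrightarrow>
   admissible_plan n m c (map (\<lambda>r. (1 + r * (m + 1), True)) [r0..<s] @ rest)"
proof (induction "s - r0" arbitrary: r0 c)
  case (Suc d)
  have "r0 * (m + 1) \<le> (s - 1) * (m + 1)"
    using Suc.prems(1) by (intro mult_le_mono1) simp
  moreover have "admissible_plan n m (1 + r0 * (m + 1) + m)
      (map (\<lambda>r. (1 + r * (m + 1), True)) [Suc r0..<s] @ rest)"
  proof (cases "Suc r0 < s")
    case True
    then show ?thesis
      using Suc by simp
  next
    case False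
    then have "r0 = s - 1"
      using Suc.prems(1) by simp
    then show ?thesis
      using Suc.prems(4) by simp
  qed
  ultimately show ?case
    using Suc.prems by (simp add: upt_conv_Cons max_def)
qed simp

lemma admissible_plan_single_layers:
  "1 \<le> i0 \<Longrightarrow> c < i0 + m \<Longrightarrow> c \<le> n - 1 \<Longrightarrow> admissible_plan n m (n - 1) rest \<Longrightarrow>
   admissible_plan n m c (map (\<lambda>i. (i, False)) [i0..<n - m] @ rest)"
proof (induction "n - m - i0" arbitrary: i0 c)
  case 0
  then show ?case
    using admissible_plan_antimono by simp
next
  case (Suc d)
  then have "admissible_plan n m (max c (i0 + m)) (map (\<lambda>i. (i, False)) [Suc i0..<n - m] @ rest)"
    by simp
  moreover have "i0 + m < n"
    using Suc.hyps(2) by arith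
  ultimately show ?case
    using Suc by (simp add: upt_conv_Cons)
qed

lemma length_concat_map_const:
  "(\<And>x. x \<in> set xs \<Longrightarrow> length (f x) = k) \<Longrightarrow> length (concat (map f xs)) = length xs * k"
  by (induction xs) auto

definition lower_plan :: "nat \<Rightarrow> nat \<Rightarrow> nat \<Rightarrow> (nat \<times> bool) list" where
  "lower_plan n m s =
     map (\<lambda>r. (1 + r * (m + 1), True)) [0..<s] @
     map (\<lambda>i. (i, False)) [s * (m + 1) - m + 1..<n - m] @ [(n, True)]"

lemma admissible_lower_plan:
  assumes "1 \<le> s" "s * (m + 1) < n"
  shows "admissible_plan n m 0 (lower_plan n m s)"
proof -
  define b where "b = s * (m + 1) - m"
  have b: "b + m = s * (m + 1)" "b = 1 + (s - 1) * (m + 1)"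
    using assms(1) unfolding b_def by (cases s; simp add: algebra_simps)+
  have "admissible_plan n m (b + m) (map (\<lambda>i. (i, False)) [b + 1..<n - m] @ [(n, True)])"
    using assms b by (intro admissible_plan_single_layers) auto
  then show ?thesis
    unfolding lower_plan_def b_def[symmetric] using assms b
    by (intro admissible_plan_full_layers) simp_all
qed

lemma length_lower_plan_blocks:
  assumes "1 \<le> s" "s * (m + 1) < n"
  shows "length (concat (map (plan_block zs z0) (lower_plan n m s))) =
           (s + 1) * length zs + (n - 1 - s * (m + 1))"
proof -
  have "m \<le> s * (m + 1)"
    using assms(1) by (cases s) simp_all
  then show ?thesis
    unfolding lower_plan_def using assms
    by (simp add: length_concat_map_const[where k = "length zs"]
        length_concat_map_const[where k = 1] plan_block_def)
qed

lemma gamma_gr_lex_path_pow_ge: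
  assumes "graph VH EH" "0 < m" "2 \<le> p" "p * (m + 1) \<le> n + m"
  shows "int p * (int (gamma_gr VH EH) - int (m + 1)) + int n + int m
           \<le> int (gamma_gr (path_lex_V n VH) (path_lex_E n m VH EH))"
proof -
  define s where "s = p - 1"
  have p: "p = s + 1"
    using assms(3) unfolding s_def by simp
  have s: "1 \<le> s" "s * (m + 1) < n"
    using assms(3,4) unfolding p by (auto simp: algebra_simps)
  have fin: "finite VH" and "VH \<noteq> {}"
    using assms(1) unfolding graph_def by auto
  then obtain z0 where z0: "z0 \<in> VH"
    by blast
  obtain zs where zs: "grundy_dom_seq VH EH zs" "length zs = gamma_gr VH EH"
    using gamma_gr_attained[OF fin] by blast
  then have "legal_seq VH EH {} zs"
    using grundy_dom_seq_iff_legal_seq by blast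
  then have "legal_seq (path_lex_V n VH) (path_lex_E n m VH EH) {}
      (concat (map (plan_block zs z0) (lower_plan n m s)))"
    using s assms(2) z0 admissible_lower_plan by (intro legal_seq_plan) auto
  moreover have "finite (path_lex_V n VH)"
    using fin by (simp add: lex_V_def path_pow_V_def)
  ultimately have "(s + 1) * gamma_gr VH EH + (n - 1 - s * (m + 1))
      \<le> gamma_gr (path_lex_V n VH) (path_lex_E n m VH EH)"
    using legal_seq_length_le_gamma_gr(1) length_lower_plan_blocks[OF s] zs(2) by metis
  moreover have "int ((s + 1) * gamma_gr VH EH + (n - 1 - s * (m + 1))) =
      int p * (int (gamma_gr VH EH) - int (m + 1)) + int n + int m"
    using s unfolding p by (simp add: algebra_simps of_nat_diff)
  ultimately show ?thesis
    by linarith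
qed

section \<open>The upper bound\<close>

locale lex_grundy_seq =
  fixes VG :: "'g set" and EG :: "'g \<Rightarrow> 'g \<Rightarrow> bool"
    and VH :: "'h set" and EH :: "'h \<Rightarrow> 'h \<Rightarrow> bool"
    and xs :: "('g \<times> 'h) list"
  assumes graph_G: "graph VG EG" and graph_H: "graph VH EH"
    and grundy: "grundy_dom_seq (lex_V VG VH) (lex_E VG EG VH EH) xs"
begin

abbreviation N :: "'g \<times> 'h \<Rightarrow> ('g \<times> 'h) set" where
  "N \<equiv> cnbh (lex_V VG VH) (lex_E VG EG VH EH)"

definition layer :: "nat \<Rightarrow> 'g" where
  "layer j = fst (xs ! j)"

definition hvert :: "nat \<Rightarrow> 'h" where
  "hvert j = snd (xs ! j)"

definition dominated_before :: "nat \<Rightarrow> ('g \<times> 'h) set" where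
  "dominated_before i = (\<Union>j<i. N (xs ! j))"

text \<open>Each vertex of the sequence footprints a vertex either of its own layer (it is inner)
  or of a neighbouring layer \<open>l\<close>, which it dominates entirely (\<open>l\<close> is a witness layer for it).\<close>

definition inner :: "nat \<Rightarrow> bool" where
  "inner j \<longleftrightarrow> j < length xs \<and> (\<exists>y\<in>cnbh VH EH (hvert j). (layer j, y) \<notin> dominated_before j)"

definition witness :: "nat \<Rightarrow> 'g \<Rightarrow> bool" where
  "witness i l \<longleftrightarrow> i < length xs \<and> EG (layer i) l \<and> (\<exists>y\<in>VH. (l, y) \<notin> dominated_before i)"

lemma EG_sym: "EG a b \<Longrightarrow> EG b a"
  and EG_irrefl: "\<not> EG a a"
  and EG_in_VG: "EG a b \<Longrightarrow> b \<in> VG"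
  using graph_G unfolding graph_def by blast+

lemma finite_VH: "finite VH" and VH_nonempty: "VH \<noteq> {}"
  using graph_H unfolding graph_def by blast+

lemma finite_VG: "finite VG" and VG_nonempty: "VG \<noteq> {}"
  using graph_G unfolding graph_def by blast+

lemma nth_xs:
  assumes "j < length xs"
  shows "layer j \<in> VG" "hvert j \<in> VH" "xs ! j = (layer j, hvert j)"
proof -
  have "xs ! j \<in> lex_V VG VH"
    using grundy assms unfolding grundy_dom_seq_def by auto
  then show "layer j \<in> VG" "hvert j \<in> VH" "xs ! j = (layer j, hvert j)"
    unfolding layer_def hvert_def lex_V_def by auto
qed

lemma mem_N_nth:
  assumes "j < length xs"
  shows "(l, y) \<in> N (xs ! j) \<longleftrightarrow>
           y \<in> VH \<and> (EG (layer j) l \<or> (l = layer j \<and> y \<in> cnbh VH EH (hvert j)))"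
  using cnbh_lex_iff[OF graph_G nth_xs(1,2)[OF assms]] nth_xs(3)[OF assms] by simp

lemma inner_or_witness:
  assumes "j < length xs"
  shows "inner j \<or> (\<exists>l. witness j l)"
proof -
  have "N (xs ! j) - dominated_before j \<noteq> {}"
    using grundy assms unfolding grundy_dom_seq_def dominated_before_def by blast
  then obtain l y where "(l, y) \<in> N (xs ! j)" "(l, y) \<notin> dominated_before j"
    by auto
  then show ?thesis
    using mem_N_nth[OF assms] assms unfolding inner_def witness_def by blast
qed

lemma inner_no_earlier_nbr:
  assumes "inner j" "j' < j"
  shows "\<not> EG (layer j) (layer j')"
proof
  assume nbr: "EG (layer j) (layer j')"
  obtain y where y: "y \<in> cnbh VH EH (hvert j)" "(layer j, y) \<notin> dominated_before j"
    using assms(1) unfolding inner_def by blast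
  have "j' < length xs"
    using assms unfolding inner_def by simp
  then have "(layer j, y) \<in> N (xs ! j')"
    using mem_N_nth y(1) cnbh_subset EG_sym[OF nbr] by fast
  with y(2) assms(2) show False
    unfolding dominated_before_def by blast
qed

lemma witness_no_earlier_nbr:
  assumes "witness i l" "j' < i"
  shows "\<not> EG l (layer j')"
proof
  assume nbr: "EG l (layer j')"
  obtain y where y: "y \<in> VH" "(l, y) \<notin> dominated_before i"
    using assms(1) unfolding witness_def by blast
  have "j' < length xs"
    using assms unfolding witness_def by simp
  then have "(l, y) \<in> N (xs ! j')"
    using mem_N_nth y(1) EG_sym[OF nbr] by blast
  with y(2) assms(2) show False
    unfolding dominated_before_def by blast
qed

lemma inner_if_first_near:
  assumes "j < length xs" "\<And>j'. j' < j \<Longrightarrow> \<not> EG (layer j) (layer j') \<and> layer j' \<noteq> layer j"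
  shows "inner j"
proof -
  have "(layer j, hvert j) \<notin> N (xs ! j')" if "j' < j" for j'
    using assms that mem_N_nth[of j'] EG_sym by fastforce
  then have "(layer j, hvert j) \<notin> dominated_before j"
    unfolding dominated_before_def by blast
  with self_in_cnbh[OF nth_xs(2)[OF assms(1)]] assms(1) show ?thesis
    unfolding inner_def by blast
qed

lemma inner_0: "inner 0"
proof (rule inner_if_first_near)
  obtain g h where "g \<in> VG" "h \<in> VH"
    using VG_nonempty VH_nonempty by blast
  then have "xs \<noteq> []"
    using grundy cnbh_subset unfolding grundy_dom_seq_def lex_V_def by fastforce
  then show "0 < length xs"
    by simp
qed simp

definition Inner :: "nat set" where
  "Inner = {j. inner j}"

definition Outer :: "nat set" where
  "Outer = {j. j < length xs \<and> \<not> inner j}"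

definition witness_layer :: "nat \<Rightarrow> 'g" where
  "witness_layer j = (SOME l. witness j l)"

definition witness_layers :: "'g set" where
  "witness_layers = witness_layer ` Outer"

definition inner_layers :: "'g set" where
  "inner_layers = layer ` Inner"

definition inner_at :: "'g \<Rightarrow> nat set" where
  "inner_at l = {j \<in> Inner. layer j = l}"

text \<open>Neither inner nor witness layers, yet numerous: this is what bounds the number of
  inner and witness layers.\<close>

definition inner_covered_layers :: "'g set" where
  "inner_covered_layers =
     {l \<in> VG. \<exists>j. inner j \<and> EG l (layer j) \<and> (\<forall>j'<j. \<not> EG l (layer j'))}"

lemma finite_Inner: "finite Inner"
  by (rule finite_subset[of _ "{..<length xs}"]) (auto simp: Inner_def inner_def)

lemma finite_inner_layers: "finite inner_layers"
  using finite_Inner unfolding inner_layers_def by simp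

lemma inner_layers_nonempty: "inner_layers \<noteq> {}"
  using inner_0 unfolding inner_layers_def Inner_def by blast

lemma length_eq_card_Inner_Outer: "length xs = card Inner + card Outer"
proof -
  have "Inner \<union> Outer = {..<length xs}" "Inner \<inter> Outer = {}"
    unfolding Inner_def Outer_def inner_def by auto
  then show ?thesis
    using card_Un_disjoint[OF finite_Inner, of Outer] by (simp add: Outer_def)
qed

lemma witness_witness_layer:
  assumes "j \<in> Outer"
  shows "witness j (witness_layer j)"
proof -
  have "\<exists>l. witness j l"
    using assms inner_or_witness unfolding Outer_def by blast
  then show ?thesis
    unfolding witness_layer_def by (rule someI_ex)
qed

lemma witness_unique:
  assumes "witness i l" "witness i' l"
  shows "i = i'"
proof (rule ccontr)
  assume "i \<noteq> i'"
  with assms show False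
    using witness_no_earlier_nbr[OF assms(1), of i'] witness_no_earlier_nbr[OF assms(2), of i] EG_sym
    unfolding witness_def by (metis linorder_neqE_nat)
qed

lemma card_witness_layers: "card witness_layers = card Outer"
  unfolding witness_layers_def
  by (rule card_image) (metis inj_onI witness_unique witness_witness_layer)

lemma inner_at_footprints:
  assumes "j \<in> inner_at l"
  shows "\<exists>y\<in>cnbh VH EH (hvert j). \<forall>j'\<in>inner_at l. j' < j \<longrightarrow> y \<notin> cnbh VH EH (hvert j')"
proof -
  obtain y where y: "y \<in> cnbh VH EH (hvert j)" "(l, y) \<notin> dominated_before j"
    using assms unfolding inner_at_def Inner_def inner_def by blast
  have "y \<notin> cnbh VH EH (hvert j')" if "j' \<in> inner_at l" "j' < j" for j'
  proof
    assume "y \<in> cnbh VH EH (hvert j')"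
    moreover have "j' < length xs" "layer j' = l"
      using that unfolding inner_at_def Inner_def inner_def by auto
    ultimately have "(l, y) \<in> N (xs ! j')"
      using mem_N_nth cnbh_subset by fast
    with y(2) that(2) show False
      unfolding dominated_before_def by blast
  qed
  with y(1) show ?thesis
    by blast
qed

text \<open>The inner vertices of a witness layer precede the vertex witnessing it, so they cannot
  dominate the whole copy of \<open>H\<close> in that layer.\<close>

lemma card_inner_at_le: "card (inner_at l) \<le> gamma_gr VH EH"
  and card_inner_at_witness_less: "l \<in> witness_layers \<Longrightarrow> card (inner_at l) < gamma_gr VH EH"
proof -
  have fin: "finite (inner_at l)"
    using finite_Inner unfolding inner_at_def by simp
  have sub: "hvert ` inner_at l \<subseteq> VH"
    using nth_xs(2) unfolding inner_at_def Inner_def inner_def by blast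
  note bound = card_sorted_family_le_gamma_gr[OF finite_VH fin sub inner_at_footprints]
  show le: "card (inner_at l) \<le> gamma_gr VH EH"
    using bound(1) .
  assume "l \<in> witness_layers"
  then obtain i where i: "i \<in> Outer" "witness i l"
    using witness_witness_layer unfolding witness_layers_def by blast
  then obtain y where y: "y \<in> VH" "(l, y) \<notin> dominated_before i"
    unfolding witness_def by blast
  show "card (inner_at l) < gamma_gr VH EH"
  proof (rule ccontr)
    assume "\<not> ?thesis"
    with le have "(\<Union>j\<in>inner_at l. cnbh VH EH (hvert j)) = VH"
      using bound(2) by simp
    with y(1) obtain j where j: "j \<in> inner_at l" "y \<in> cnbh VH EH (hvert j)"
      by blast
    then have "inner j" "layer j = l"
      unfolding inner_at_def Inner_def by auto
    moreover have "\<not> inner i"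
      using i(1) unfolding Outer_def by simp
    ultimately have "j < i"
      using inner_no_earlier_nbr[of j i] i(2) EG_sym unfolding witness_def
      by (metis linorder_neqE_nat)
    moreover have "(l, y) \<in> N (xs ! j)"
      using mem_N_nth[of j] j(2) \<open>layer j = l\<close> \<open>inner j\<close> y(1) unfolding inner_def by simp
    ultimately show False
      using y(2) unfolding dominated_before_def by blast
  qed
qed

lemma length_le_inner_layers_witness_layers:
  "length xs \<le> gamma_gr VH EH * card inner_layers + card (witness_layers - inner_layers)"
proof -
  let ?k = "gamma_gr VH EH" and ?P = inner_layers and ?W = witness_layers
  have "Inner = (\<Union>l\<in>?P. inner_at l)"
    unfolding inner_layers_def inner_at_def by auto
  moreover have "card (\<Union>l\<in>?P. inner_at l) = (\<Sum>l\<in>?P. card (inner_at l))"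
    using finite_inner_layers finite_Inner by (intro card_UN_disjoint) (auto simp: inner_at_def)
  ultimately have "card Inner = (\<Sum>l\<in>?P. card (inner_at l))"
    by simp
  moreover have "card (?P \<inter> ?W) = (\<Sum>l\<in>?P. if l \<in> ?W then 1 else 0)"
    using finite_inner_layers by (simp add: sum.If_cases)
  moreover have "(\<Sum>l\<in>?P. card (inner_at l) + (if l \<in> ?W then 1 else 0)) \<le> (\<Sum>l\<in>?P. ?k)"
    using card_inner_at_le card_inner_at_witness_less by (intro sum_mono) fastforce
  ultimately have "card Inner + card (?P \<inter> ?W) \<le> ?k * card ?P"
    by (simp add: sum.distrib mult.commute)
  moreover have "card ?W = card (?P \<inter> ?W) + card (?W - ?P)"
    using card_Int_Diff[of ?W ?P] finite_Inner
    by (simp add: witness_layers_def Outer_def Int_commute)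
  ultimately show ?thesis
    using length_eq_card_Inner_Outer card_witness_layers by linarith
qed

lemma inner_covered_disjoint_witness: "inner_covered_layers \<inter> witness_layers = {}"
proof -
  have False if l: "l \<in> inner_covered_layers" and i: "i \<in> Outer" "witness i l" for l i
  proof -
    obtain j where j: "inner j" "EG l (layer j)" "\<forall>j'<j. \<not> EG l (layer j')"
      using l unfolding inner_covered_layers_def by blast
    have "\<not> i < j"
      using j(3) i(2) EG_sym unfolding witness_def by blast
    moreover have "\<not> j < i"
      using witness_no_earlier_nbr[OF i(2)] j(2) by blast
    moreover have "i \<noteq> j"
      using j(1) i(1) unfolding Outer_def by blast
    ultimately show False
      by simp
  qed
  then show ?thesis
    unfolding witness_layers_def using witness_witness_layer by blast
qed

lemma inner_covered_disjoint_inner: "inner_covered_layers \<inter> inner_layers = {}"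
proof -
  have False if l: "l \<in> inner_covered_layers" and j1: "inner j1" "layer j1 = l" for l j1
  proof -
    obtain j where j: "inner j" "EG l (layer j)" "\<forall>j'<j. \<not> EG l (layer j')"
      using l unfolding inner_covered_layers_def by blast
    have "\<not> j < j1"
      using j(2) j1(2) inner_no_earlier_nbr[OF j1(1), of j] by blast
    moreover have "\<not> j1 < j"
      using j(2) j1(2) inner_no_earlier_nbr[OF j(1), of j1] EG_sym by blast
    moreover have "j \<noteq> j1"
      using j(2) j1(2) EG_irrefl by blast
    ultimately show False
      by simp
  qed
  then show ?thesis
    unfolding inner_layers_def Inner_def by blast
qed

lemma card_layer_classes:
  "card (witness_layers - inner_layers) + card inner_layers + card inner_covered_layers \<le> card VG"
proof -
  let ?P = inner_layers and ?W = witness_layers and ?X = inner_covered_layers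
  have "?W \<subseteq> VG"
    using witness_witness_layer EG_in_VG unfolding witness_layers_def witness_def by blast
  moreover have "?P \<subseteq> VG"
    using nth_xs(1) unfolding inner_layers_def Inner_def inner_def by blast
  moreover have "?X \<subseteq> VG"
    unfolding inner_covered_layers_def by blast
  ultimately have sub: "(?W - ?P) \<union> ?P \<union> ?X \<subseteq> VG"
    by blast
  then have fin: "finite (?W - ?P)" "finite ?P" "finite ?X"
    using finite_subset[OF _ finite_VG] by blast+
  have "((?W - ?P) \<union> ?P) \<inter> ?X = {}"
    using inner_covered_disjoint_witness inner_covered_disjoint_inner by blast
  then have "card ((?W - ?P) \<union> ?P \<union> ?X) = card ((?W - ?P) \<union> ?P) + card ?X"
    using fin by (intro card_Un_disjoint) auto
  also have "card ((?W - ?P) \<union> ?P) = card (?W - ?P) + card ?P"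
    using fin by (intro card_Un_disjoint) auto
  finally show ?thesis
    using card_mono[OF finite_VG sub] by simp
qed

lemma nbrs_first_in_inner_covered: "{l. EG (layer 0) l} \<subseteq> inner_covered_layers"
proof
  fix l
  assume "l \<in> {l. EG (layer 0) l}"
  then have "l \<in> VG" "EG l (layer 0)"
    using EG_in_VG EG_sym by auto
  with inner_0 show "l \<in> inner_covered_layers"
    unfolding inner_covered_layers_def by blast
qed

definition first_at :: "'g \<Rightarrow> nat" where
  "first_at c = (LEAST j. j < length xs \<and> layer j = c)"

lemma first_at:
  assumes "c \<in> inner_layers"
  shows "inner (first_at c)" "layer (first_at c) = c"
    and "\<And>j'. j' < first_at c \<Longrightarrow> layer j' \<noteq> c \<and> \<not> EG c (layer j')"
proof -
  obtain j where j: "inner j" "layer j = c"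
    using assms unfolding inner_layers_def Inner_def by blast
  then have in_c: "j < length xs \<and> layer j = c"
    unfolding inner_def by simp
  have first: "first_at c < length xs \<and> layer (first_at c) = c"
    unfolding first_at_def by (rule LeastI[where P = "\<lambda>j. j < length xs \<and> layer j = c", OF in_c])
  have "first_at c \<le> j"
    unfolding first_at_def by (rule Least_le[where P = "\<lambda>j. j < length xs \<and> layer j = c", OF in_c])
  have before: "layer j' \<noteq> c \<and> \<not> EG c (layer j')" if "j' < first_at c" for j'
  proof
    show "layer j' \<noteq> c"
      using not_less_Least[OF that[unfolded first_at_def]] that first by auto
    show "\<not> EG c (layer j')"
      using inner_no_earlier_nbr[OF j(1), of j'] that \<open>first_at c \<le> j\<close> j(2) by simp
  qed
  then show "inner (first_at c)"
    using inner_if_first_near first by simp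
  show "layer (first_at c) = c"
    using first by simp
  show "\<And>j'. j' < first_at c \<Longrightarrow> layer j' \<noteq> c \<and> \<not> EG c (layer j')"
    using before by blast
qed

lemma first_at_less_length: "c \<in> inner_layers \<Longrightarrow> first_at c < length xs"
  using first_at(1) unfolding inner_def by blast

lemma inner_layers_independent:
  assumes "c \<in> inner_layers" "c' \<in> inner_layers"
  shows "\<not> EG c c'"
proof
  assume nbr: "EG c c'"
  then have "first_at c \<noteq> first_at c'"
    using first_at(2)[OF assms(1)] first_at(2)[OF assms(2)] EG_irrefl by metis
  then consider "first_at c < first_at c'" | "first_at c' < first_at c"
    by linarith
  then show False
  proof cases
    case 1
    then show False
      using first_at(3)[OF assms(2) 1] first_at(2)[OF assms(1)] EG_sym[OF nbr] by simp
  next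
    case 2
    then show False
      using first_at(3)[OF assms(1) 2] first_at(2)[OF assms(2)] nbr by simp
  qed
qed

end

lemma ex_linear_bound_from_counts:
  fixes len k p x n m :: nat
  assumes "len + p + x \<le> k * p + n" "p + x \<le> n" "m \<le> x" "(p - 1) * m \<le> x"
    and "1 \<le> p" "1 \<le> k" "m + 2 \<le> n"
  shows "\<exists>q\<ge>2. q * (m + 1) \<le> n + m \<and> int len \<le> int q * (int k - int (m + 1)) + int n + int m"
proof (cases "p = 1")
  case True
  then show ?thesis
    using assms by (intro exI[of _ 2]) (simp add: algebra_simps)
next
  case False
  have gaps: "int p * int m - int m \<le> int x"
    using assms(4,5) by (simp add: of_nat_diff algebra_simps flip: of_nat_mult)
  have "int len + int p + int x \<le> int k * int p + int n"
    using assms(1) by (metis of_nat_add of_nat_le_iff of_nat_mult)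
  with gaps have "int len \<le> int p * (int k - int (m + 1)) + int n + int m"
    by (simp add: algebra_simps)
  moreover have "int p * int m + int p \<le> int n + int m"
    using gaps assms(2) by linarith
  then have "p * (m + 1) \<le> n + m"
    by (simp add: algebra_simps) (metis of_nat_add of_nat_le_iff of_nat_mult)
  moreover have "2 \<le> p"
    using False assms(5) by simp
  ultimately show ?thesis
    by blast
qed

locale path_lex_grundy_seq = lex_grundy_seq "path_pow_V n" "path_pow_E n m" VH EH xs
  for n m :: nat and VH :: "'h set" and EH :: "'h \<Rightarrow> 'h \<Rightarrow> bool" and xs :: "(nat \<times> 'h) list" +
  assumes m_less_n: "m < n"
begin

lemma layer_range: "j < length xs \<Longrightarrow> layer j \<in> {1..n}"
  using nth_xs(1) unfolding path_pow_V_def .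

lemma inner_layers_range: "inner_layers \<subseteq> {1..n}"
  using layer_range unfolding inner_layers_def Inner_def inner_def by blast

lemma inner_layers_far_apart:
  assumes "c \<in> inner_layers" "c' \<in> inner_layers" "c < c'"
  shows "c + m < c'"
proof (rule ccontr)
  assume "\<not> c + m < c'"
  moreover have "c \<in> {1..n}" "c' \<in> {1..n}"
    using assms(1,2) inner_layers_range by auto
  ultimately have "path_pow_E n m c c'"
    using assms(3) unfolding path_pow_E_def by auto
  with inner_layers_independent[OF assms(1,2)] show False ..
qed

definition next_inner_layer :: "nat \<Rightarrow> nat" where
  "next_inner_layer b = Min {c \<in> inner_layers. b < c}"

lemma next_inner_layer:
  assumes "b \<in> inner_layers - {Max inner_layers}"
  shows "next_inner_layer b \<in> inner_layers" "b < next_inner_layer b"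
    and "\<And>c. c \<in> inner_layers \<Longrightarrow> b < c \<Longrightarrow> next_inner_layer b \<le> c"
proof -
  have "b < Max inner_layers" "Max inner_layers \<in> inner_layers"
    using assms Max_ge[OF finite_inner_layers, of b] Max_in[OF finite_inner_layers] by auto
  then have "{c \<in> inner_layers. b < c} \<noteq> {}"
    by blast
  then have "next_inner_layer b \<in> {c \<in> inner_layers. b < c}"
    unfolding next_inner_layer_def using finite_inner_layers by (intro Min_in) auto
  then show "next_inner_layer b \<in> inner_layers" "b < next_inner_layer b"
    by auto
  show "\<And>c. c \<in> inner_layers \<Longrightarrow> b < c \<Longrightarrow> next_inner_layer b \<le> c"
    unfolding next_inner_layer_def using finite_inner_layers by (intro Min_le) auto
qed

text \<open>Between two consecutive inner layers nothing is played near them before both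
  have received their first vertex: the first such vertex would be inner, in a layer
  strictly between them.\<close>

lemma early_vertices_avoid_gap:
  assumes b: "b \<in> inner_layers" and b': "b' \<in> inner_layers" "b < b'"
    and consecutive: "\<And>c. c \<in> inner_layers \<Longrightarrow> b < c \<Longrightarrow> b' \<le> c"
  shows "j < first_at b \<Longrightarrow> j < first_at b' \<Longrightarrow> layer j + m < b \<or> b' + m < layer j"
proof (induction j rule: less_induct)
  case (less j)
  have j: "j < length xs"
    using less.prems(1) first_at_less_length[OF b] by simp
  have layer_j: "layer j \<in> {1..n}"
    using layer_range[OF j] .
  have "b \<in> {1..n}" "b' \<in> {1..n}"
    using b b' inner_layers_range by auto
  moreover have "layer j \<noteq> b \<and> \<not> path_pow_E n m b (layer j)"
    "layer j \<noteq> b' \<and> \<not> path_pow_E n m b' (layer j)"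
    using first_at(3)[OF b less.prems(1)] first_at(3)[OF b'(1) less.prems(2)] by auto
  ultimately have far: "b + m < layer j \<or> layer j + m < b" "b' + m < layer j \<or> layer j + m < b'"
    using layer_j unfolding path_pow_E_def by auto
  show ?case
  proof (rule ccontr)
    assume near: "\<not> ?case"
    with far have between: "b + m < layer j" "layer j + m < b'"
      by auto
    have "inner j"
    proof (rule inner_if_first_near[OF j])
      fix j'
      assume "j' < j"
      then have "layer j' + m < b \<or> b' + m < layer j'"
        using less.IH less.prems by simp
      with between show "\<not> path_pow_E n m (layer j) (layer j') \<and> layer j' \<noteq> layer j"
        unfolding path_pow_E_def by auto
    qed
    then have "layer j \<in> inner_layers"
      unfolding inner_layers_def Inner_def by blast
    with consecutive between show False
      by fastforce
  qed
qed

definition gap_layers :: "nat \<Rightarrow> nat set" where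
  "gap_layers b =
     (if first_at b < first_at (next_inner_layer b) then {b<..b + m}
      else {next_inner_layer b - m..<next_inner_layer b})"

lemma gap_layers_subset:
  assumes "b \<in> inner_layers - {Max inner_layers}"
  shows "gap_layers b \<subseteq> inner_covered_layers \<inter> {b<..<next_inner_layer b}"
proof
  fix l
  assume l: "l \<in> gap_layers b"
  let ?b' = "next_inner_layer b"
  note b' = next_inner_layer[OF assms]
  have bP: "b \<in> inner_layers"
    using assms by simp
  have far: "b + m < ?b'"
    using inner_layers_far_apart[OF bP b'(1,2)] .
  have range: "b \<in> {1..n}" "?b' \<in> {1..n}"
    using bP b'(1) inner_layers_range by auto
  define c where "c = (if first_at b < first_at ?b' then b else ?b')"
  have cP: "c \<in> inner_layers" and first: "first_at c \<le> first_at b" "first_at c \<le> first_at ?b'"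
    using bP b'(1) unfolding c_def by auto
  have l_between: "b < l" "l < ?b'"
    using l far unfolding gap_layers_def by (auto split: if_splits)
  have "path_pow_E n m l c"
    using l far range l_between unfolding gap_layers_def c_def path_pow_E_def
    by (auto split: if_splits)
  moreover have "\<not> path_pow_E n m l (layer j')" if "j' < first_at c" for j'
    using early_vertices_avoid_gap[OF bP b'(1,2) b'(3), of j'] that first l_between
    unfolding path_pow_E_def by auto
  ultimately have "\<exists>j. inner j \<and> path_pow_E n m l (layer j) \<and>
      (\<forall>j'<j. \<not> path_pow_E n m l (layer j'))"
    using first_at(1,2)[OF cP] by (intro exI[of _ "first_at c"]) simp
  moreover have "l \<in> path_pow_V n"
    using l_between range unfolding path_pow_V_def by auto
  ultimately have "l \<in> inner_covered_layers"
    unfolding inner_covered_layers_def by blast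
  with l_between show "l \<in> inner_covered_layers \<inter> {b<..<?b'}"
    by simp
qed

lemma card_gap_layers:
  assumes "b \<in> inner_layers - {Max inner_layers}"
  shows "card (gap_layers b) = m"
proof -
  have "b + m < next_inner_layer b"
    using assms next_inner_layer[OF assms] inner_layers_far_apart by blast
  then show ?thesis
    unfolding gap_layers_def by simp
qed

lemma card_inner_covered_ge_gaps: "(card inner_layers - 1) * m \<le> card inner_covered_layers"
proof -
  let ?B = "inner_layers - {Max inner_layers}"
  have disjoint: "gap_layers b \<inter> gap_layers b' = {}" if "b \<in> ?B" "b' \<in> ?B" "b < b'" for b b'
    using gap_layers_subset[OF that(1)] gap_layers_subset[OF that(2)]
      next_inner_layer(3)[OF that(1), of b'] that by fastforce
  have "card (\<Union>b\<in>?B. gap_layers b) = (\<Sum>b\<in>?B. card (gap_layers b))"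
  proof (rule card_UN_disjoint)
    show "finite ?B"
      using finite_inner_layers by simp
    show "\<forall>b\<in>?B. finite (gap_layers b)"
      unfolding gap_layers_def by simp
    show "\<forall>b\<in>?B. \<forall>b'\<in>?B. b \<noteq> b' \<longrightarrow> gap_layers b \<inter> gap_layers b' = {}"
      using disjoint by (metis inf_commute linorder_neqE_nat)
  qed
  also have "\<dots> = (card inner_layers - 1) * m"
    using card_gap_layers finite_inner_layers Max_in[OF finite_inner_layers inner_layers_nonempty]
    by simp
  finally have "card (\<Union>b\<in>?B. gap_layers b) = (card inner_layers - 1) * m" .
  moreover have "(\<Union>b\<in>?B. gap_layers b) \<subseteq> inner_covered_layers"
    using gap_layers_subset by blast
  moreover have "finite inner_covered_layers"
    using finite_VG unfolding inner_covered_layers_def by simp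
  ultimately show ?thesis
    by (metis card_mono)
qed

lemma card_inner_covered_ge_m: "m \<le> card inner_covered_layers"
proof -
  have "layer 0 \<in> {1..n}"
    using inner_0 layer_range unfolding inner_def by blast
  then have "m \<le> card {l. path_pow_E n m (layer 0) l}"
    using card_path_pow_nbrs m_less_n by blast
  moreover have "finite inner_covered_layers"
    using finite_VG unfolding inner_covered_layers_def by simp
  ultimately show ?thesis
    using nbrs_first_in_inner_covered card_mono le_trans by blast
qed

lemma length_le_linear_bound:
  assumes "m + 2 \<le> n"
  shows "\<exists>p\<ge>2. p * (m + 1) \<le> n + m \<and>
           int (length xs) \<le> int p * (int (gamma_gr VH EH) - int (m + 1)) + int n + int m"
proof (rule ex_linear_bound_from_counts)
  show "length xs + card inner_layers + card inner_covered_layers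
      \<le> gamma_gr VH EH * card inner_layers + n"
    and "card inner_layers + card inner_covered_layers \<le> n"
    using length_le_inner_layers_witness_layers card_layer_classes
    unfolding path_pow_V_def by simp_all
  show "1 \<le> card inner_layers"
    using finite_inner_layers inner_layers_nonempty by (simp add: Suc_le_eq card_gt_0_iff)
  show "1 \<le> gamma_gr VH EH"
    using gamma_gr_pos finite_VH VH_nonempty .
qed (use card_inner_covered_ge_m card_inner_covered_ge_gaps assms in simp_all)

end

lemma gamma_gr_lex_path_pow_le:
  assumes "graph VH EH" "m + 2 \<le> n"
  shows "\<exists>p\<ge>2. p * (m + 1) \<le> n + m \<and>
           int (gamma_gr (path_lex_V n VH) (path_lex_E n m VH EH))
             \<le> int p * (int (gamma_gr VH EH) - int (m + 1)) + int n + int m"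
proof -
  have "finite (path_lex_V n VH)"
    using assms(1) unfolding graph_def lex_V_def path_pow_V_def by simp
  then obtain xs where "grundy_dom_seq (path_lex_V n VH) (path_lex_E n m VH EH) xs"
    and len: "length xs = gamma_gr (path_lex_V n VH) (path_lex_E n m VH EH)"
    using gamma_gr_attained by blast
  then interpret path_lex_grundy_seq n m VH EH xs
    using assms graph_path_pow by unfold_locales auto
  show ?thesis
    using length_le_linear_bound[OF assms(2)] unfolding len .
qed

lemma linear_max_at_endpoint:
  fixes G c d :: int and p T :: nat
  assumes lower: "\<And>q. 2 \<le> q \<Longrightarrow> q \<le> T \<Longrightarrow> int q * c + d \<le> G"
    and upper: "2 \<le> p" "p \<le> T" "G \<le> int p * c + d"
  shows "G = (if 0 \<le> c then int T * c + d else 2 * c + d)"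
proof (cases "0 \<le> c")
  case True
  then have "int p * c \<le> int T * c"
    using upper(2) by (intro mult_right_mono) simp_all
  with True upper lower[of T] show ?thesis
    by simp
next
  case False
  then have "int p * c \<le> 2 * c"
    using upper(1) by (intro mult_right_mono_neg) simp_all
  moreover have "2 * c + d \<le> G"
    using lower[of 2] upper(1,2) by simp
  ultimately have "G = 2 * c + d"
    using upper(3) by linarith
  with False show ?thesis
    by simp
qed

lemma ceiling_divide_nonneg: "0 \<le> \<lceil>real n / real (m + 1)\<rceil>"
proof -
  have "0 \<le> real n / real (m + 1)"
    by simp
  then show ?thesis
    by (simp only: zero_le_ceiling)
qed

lemma le_nat_ceiling_divide_iff:
  fixes p n m :: nat
  shows "p \<le> nat \<lceil>real n / real (m + 1)\<rceil> \<longleftrightarrow> p * (m + 1) \<le> n + m"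
proof -
  have "p \<le> nat \<lceil>real n / real (m + 1)\<rceil> \<longleftrightarrow> real p - 1 < real n / real (m + 1)"
    using ceiling_divide_nonneg by (simp add: le_nat_iff le_ceiling_iff)
  also have "\<dots> \<longleftrightarrow> (real p - 1) * real (m + 1) < real n"
    by (intro pos_less_divide_eq) simp
  also have "\<dots> \<longleftrightarrow> real (p * (m + 1)) < real (n + m + 1)"
    by (intro iffI) (simp_all add: algebra_simps)
  also have "\<dots> \<longleftrightarrow> p * (m + 1) \<le> n + m"
    by (simp only: of_nat_less_iff less_Suc_eq_le Suc_eq_plus1[symmetric])
  finally show ?thesis .
qed

theorem theorem6:
  fixes n m :: nat and V :: "'a set" and E :: "'a \<Rightarrow> 'a \<Rightarrow> bool"
  assumes "0 < n" "0 < m" "m + 2 \<le> n" and "graph V E"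
  shows "int (gamma_gr (lex_V (path_pow_V n) V)
                       (lex_E (path_pow_V n) (path_pow_E n m) V E)) =
    (if gamma_gr V E \<ge> m + 1
     then \<lceil>real n / real (m + 1)\<rceil> * (int (gamma_gr V E) - int (m + 1)) + int n + int m
     else 2 * int (gamma_gr V E) + int n - int m - 2)"
proof -
  define T where "T = nat \<lceil>real n / real (m + 1)\<rceil>"
  define c where "c = int (gamma_gr V E) - int (m + 1)"
  let ?G = "int (gamma_gr (path_lex_V n V) (path_lex_E n m V E))"
  have admissible: "p \<le> T \<longleftrightarrow> p * (m + 1) \<le> n + m" for p
    unfolding T_def by (rule le_nat_ceiling_divide_iff)
  have lower: "int q * c + (n + m) \<le> ?G" if "2 \<le> q" "q \<le> T" for q
    using gamma_gr_lex_path_pow_ge[OF assms(4,2) that(1) admissible[THEN iffD1, OF that(2)]]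
    unfolding c_def by linarith
  obtain p where "2 \<le> p" "p \<le> T" "?G \<le> int p * c + (n + m)"
    using gamma_gr_lex_path_pow_le[OF assms(4,3)] admissible unfolding c_def by auto
  from linear_max_at_endpoint[OF lower this]
  have "?G = (if 0 \<le> c then int T * c + (n + m) else 2 * c + (n + m))" .
  moreover have "int T = \<lceil>real n / real (m + 1)\<rceil>"
    unfolding T_def using ceiling_divide_nonneg by (rule nat_0_le)
  ultimately show ?thesis
    unfolding c_def by auto
qed

end
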